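(* Let $T_b, T_r, S, T_u : \mathbb{N}_{\geq 1} \to \mathbb{R}_{>0}$ satisfy $T_r(n) = T_b(n) + T_r(n-1)$ and $T_u(n) = S(n) + T_u(\lfloor n/2 \rfloor)$ for $n \geq 2$, where $T_b$ and $S$ are each $\Theta(n^{a}(\log n)^{b})$ for some non-negative integers $a,b$. Then $T_u(n)/T_r(n) \to 0$ (super-linear speedup, i.e. $\Theta(T_u) \subsetneq \Theta(T_r)$) if and only if $S(n)/(n\, T_b(n)) \to 0$ (i.e. $\Theta(S) \subsetneq \Theta(n \, T_b)$).
   Context: $T_b(n)$ models the time of the $n$-th recursive step of an original linear recursion, $T_r(n)$ the time of the original recursion with recursion depth $n$, $S(n)=T_c(n)+T_d(n)$ the time of a combined recursive step of the unfolder and meta-interpreter in runtime repeated recursion unfolding, and $T_u(n)$ the total time of runtime repeated recursion unfolding for recursion depth $n$. Asymptotic notation is as $n\to\infty$. *)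

theory Defs
  imports Complex_Main "HOL-Library.Landau_Symbols"
begin

end

theory Submission
  imports Defs
begin

text \<open>
  Write \<open>h n = n\<^sup>a (ln n)\<^sup>b\<close> and \<open>g n = n h n\<close>. Since \<open>h\<close> is monotone and the increments
  \<open>g (n + 1) - g n\<close> lie between \<open>h (n + 1)\<close> and \<open>(a + b + 1) h (n + 1)\<close>, the sum \<open>T\<^sub>r\<close> of
  \<open>T\<^sub>b \<in> \<Theta>(h)\<close> is \<open>\<Theta>(g)\<close>, and so is \<open>n T\<^sub>b\<close>. As \<open>g (n div 2) \<le> g n / 2\<close>, the
  halving recursion for \<open>T\<^sub>u\<close> sums the values of \<open>S\<close> along a geometrically shrinking
  sequence, so \<open>T\<^sub>u \<in> o(g)\<close> exactly when \<open>S \<in> o(g)\<close>. Both limits in the theorem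
  express these two \<open>o(g)\<close> statements.
\<close>

lemma power_diff_le:
  fixes y z :: real
  assumes "0 \<le> y" "y \<le> z"
  shows "z ^ m - y ^ m \<le> real m * z ^ (m - 1) * (z - y)"
proof (induction m)
  case 0
  then show ?case by simp
next
  case (Suc m)
  have "z ^ Suc m - y ^ Suc m = z * (z ^ m - y ^ m) + y ^ m * (z - y)"
    by (simp add: algebra_simps)
  also have "\<dots> \<le> z * (real m * z ^ (m - 1) * (z - y)) + z ^ m * (z - y)"
    using Suc assms by (intro add_mono mult_left_mono mult_right_mono power_mono) auto
  also have "z * (real m * z ^ (m - 1) * (z - y)) = real m * z ^ m * (z - y)"
    by (cases m) (auto simp: algebra_simps)
  finally show ?case by (simp add: algebra_simps)
qed

definition polylog :: "nat \<Rightarrow> nat \<Rightarrow> nat \<Rightarrow> real" where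
  "polylog a b n = real n ^ a * ln (real n) ^ b"

lemma polylog_nonneg: "0 \<le> polylog a b n"
  by (cases n) (auto simp: polylog_def)

lemma polylog_mono: "1 \<le> m \<Longrightarrow> m \<le> n \<Longrightarrow> polylog a b m \<le> polylog a b n"
  unfolding polylog_def by (intro mult_mono power_mono) auto

lemma one_le_ln_nat: "3 \<le> n \<Longrightarrow> 1 \<le> ln (real n)"
  using exp_le by (subst ln_ge_iff) auto

lemma polylog_ge_one:
  assumes "3 \<le> n"
  shows "1 \<le> polylog a b n"
proof -
  have "1 * 1 \<le> real n ^ a * ln (real n) ^ b"
    using assms one_le_ln_nat[OF assms] by (intro mult_mono one_le_power) auto
  then show ?thesis by (simp add: polylog_def)
qed

lemma polylog_halving:
  assumes "2 \<le> n"
  shows "real (n div 2) * polylog a b (n div 2) \<le> real n * polylog a b n / 2"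
proof -
  have half: "real (n div 2) \<le> real n / 2" by linarith
  have "real (n div 2) * polylog a b (n div 2) \<le> real n / 2 * polylog a b n"
    using assms half polylog_nonneg[of a b "n div 2"] polylog_mono[of "n div 2" n a b]
    by (intro mult_mono) auto
  then show ?thesis by simp
qed

lemma ln_add_one_diff_le:
  fixes x :: real
  assumes "0 < x"
  shows "ln (x + 1) - ln x \<le> 1 / x"
proof -
  have "ln (x + 1) - ln x = ln ((x + 1) / x)"
    using assms by (simp add: ln_div)
  also have "\<dots> = ln (1 + 1 / x)"
    using assms by (simp add: add_divide_distrib)
  also have "\<dots> \<le> 1 / x" using assms by (intro ln_add_one_self_le_self) auto
  finally show ?thesis .
qed

lemma polylog_increment_le:
  assumes "2 \<le> n"
  shows "real (Suc n) * polylog a b (Suc n) - real n * polylog a b n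
           \<le> real (a + 1 + b) * polylog a b (Suc n)"
proof -
  define x where "x = real n"
  define L where "L = ln x"
  define L' where "L' = ln (x + 1)"
  have x2: "2 \<le> x" using assms by (simp add: x_def)
  have L0: "0 \<le> L" and LL': "L \<le> L'" using x2 by (simp_all add: L_def L'_def)
  have L'1: "1 \<le> L'" using one_le_ln_nat[of "Suc n"] assms by (simp add: L'_def x_def add.commute)
  have dL: "L' - L \<le> 1 / x" using ln_add_one_diff_le[of x] x2 by (simp add: L_def L'_def)
  have dpow: "(x + 1) ^ (a + 1) - x ^ (a + 1) \<le> real (a + 1) * (x + 1) ^ a"
    using power_diff_le[of x "x + 1" "a + 1"] x2 by simp
  have "L' ^ b - L ^ b \<le> real b * L' ^ (b - 1) * (L' - L)"
    using power_diff_le[OF L0 LL'] .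
  also have "\<dots> \<le> real b * L' ^ (b - 1) * (1 / x)"
    using L'1 dL by (intro mult_left_mono) auto
  finally have dlog: "L' ^ b - L ^ b \<le> real b * L' ^ (b - 1) * (1 / x)" .
  have "(x + 1) ^ (a + 1) * L' ^ b - x ^ (a + 1) * L ^ b
      = ((x + 1) ^ (a + 1) - x ^ (a + 1)) * L' ^ b + x ^ (a + 1) * (L' ^ b - L ^ b)"
    by (simp add: algebra_simps)
  also have "\<dots> \<le> real (a + 1) * (x + 1) ^ a * L' ^ b + x ^ (a + 1) * (real b * L' ^ (b - 1) * (1 / x))"
    using dpow dlog L'1 x2 by (intro add_mono mult_right_mono mult_left_mono) auto
  also have "x ^ (a + 1) * (real b * L' ^ (b - 1) * (1 / x)) = real b * (x ^ a * L' ^ (b - 1))"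
    using x2 by (simp add: field_simps)
  also have "x ^ a * L' ^ (b - 1) \<le> (x + 1) ^ a * L' ^ b"
    using x2 L'1 by (intro mult_mono power_mono power_increasing) auto
  finally have "(x + 1) ^ (a + 1) * L' ^ b - x ^ (a + 1) * L ^ b
      \<le> real (a + 1) * (x + 1) ^ a * L' ^ b + real b * ((x + 1) ^ a * L' ^ b)"
    by (simp add: mult_left_mono)
  then show ?thesis
    by (simp add: polylog_def x_def L_def L'_def algebra_simps)
qed

lemma filterlim_real_times_polylog: "filterlim (\<lambda>n. real n * polylog a b n) at_top sequentially"
proof (rule filterlim_at_top_mono[OF filterlim_real_sequentially])
  show "\<forall>\<^sub>F n in sequentially. real n \<le> real n * polylog a b n"
    using eventually_ge_at_top[of 3]
    by eventually_elim (use polylog_ge_one in \<open>auto simp: mult_le_cancel_left1\<close>)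
qed

lemma bigo_linear_recursion:
  fixes T t h :: "nat \<Rightarrow> real"
  assumes rec: "eventually (\<lambda>n. T (Suc n) = t (Suc n) + T n) sequentially"
    and t_bigo: "t \<in> O(h)"
    and h_nonneg: "eventually (\<lambda>n. 0 \<le> h n) sequentially"
    and h_mono: "eventually (\<lambda>n. h n \<le> h (Suc n)) sequentially"
    and T_nonneg: "eventually (\<lambda>n. 0 \<le> T n) sequentially"
    and g_lim: "filterlim (\<lambda>n. real n * h n) at_top sequentially"
  shows "T \<in> O(\<lambda>n. real n * h n)"
proof -
  define g where "g n = real n * h n" for n
  obtain K where K: "K > 0" "eventually (\<lambda>n. norm (t n) \<le> K * norm (h n)) sequentially"
    using landau_o.bigE[OF t_bigo] by blast
  have t_Suc: "eventually (\<lambda>n. norm (t (Suc n)) \<le> K * norm (h (Suc n))) sequentially"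
    and h_Suc: "eventually (\<lambda>n. 0 \<le> h (Suc n)) sequentially"
    and g_ge: "eventually (\<lambda>n. 1 \<le> g n) sequentially"
    using K(2) h_nonneg g_lim
      eventually_sequentially_Suc[of "\<lambda>n. norm (t n) \<le> K * norm (h n)"]
      eventually_sequentially_Suc[of "\<lambda>n. 0 \<le> h n"]
    unfolding g_def filterlim_at_top by simp_all
  have "eventually (\<lambda>n. T (Suc n) = t (Suc n) + T n \<and> t (Suc n) \<le> K * h (Suc n)
           \<and> 0 \<le> h n \<and> h n \<le> h (Suc n) \<and> 0 \<le> T n \<and> 1 \<le> g n) sequentially"
    using rec t_Suc h_nonneg h_mono h_Suc T_nonneg g_ge by eventually_elim auto
  then obtain N where N: "\<And>n. n \<ge> N \<Longrightarrow> T (Suc n) = t (Suc n) + T n \<and> t (Suc n) \<le> K * h (Suc n)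
           \<and> 0 \<le> h n \<and> h n \<le> h (Suc n) \<and> 0 \<le> T n \<and> 1 \<le> g n"
    unfolding eventually_sequentially by blast
  have T_le: "T n \<le> T N + K * g n" if "N \<le> n" for n
    using that
  proof (induction n rule: dec_induct)
    case base
    then show ?case using K N[of N] by simp
  next
    case (step n)
    have "real n * h n \<le> real n * h (Suc n)" using N[OF step(1)] by (intro mult_left_mono) auto
    then have "g n + h (Suc n) \<le> g (Suc n)" by (simp add: g_def algebra_simps)
    then have "K * g n + K * h (Suc n) \<le> K * g (Suc n)"
      using K(1) by (metis distrib_left less_imp_le mult_left_mono)
    then show ?case using N[OF step(1)] step(3) by linarith
  qed
  show ?thesis
  proof (rule landau_o.bigI)
    show "0 < \<bar>T N\<bar> + K" using K by simp
    show "eventually (\<lambda>n. norm (T n) \<le> (\<bar>T N\<bar> + K) * norm (real n * h n)) sequentially"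
      unfolding eventually_sequentially
    proof (intro exI allI impI)
      fix n assume n: "N \<le> n"
      have "\<bar>T N\<bar> * 1 \<le> \<bar>T N\<bar> * g n" using N[OF n] by (intro mult_left_mono) auto
      then have "T n \<le> \<bar>T N\<bar> * g n + K * g n" using T_le[OF n] by linarith
      then show "norm (T n) \<le> (\<bar>T N\<bar> + K) * norm (real n * h n)"
        using N[OF n] by (simp add: g_def distrib_right)
    qed
  qed
qed

lemma bigomega_linear_recursion:
  fixes T t h :: "nat \<Rightarrow> real" and C :: real
  assumes rec: "eventually (\<lambda>n. T (Suc n) = t (Suc n) + T n) sequentially"
    and t_bigomega: "t \<in> \<Omega>(h)"
    and t_nonneg: "eventually (\<lambda>n. 0 \<le> t n) sequentially"
    and h_nonneg: "eventually (\<lambda>n. 0 \<le> h n) sequentially"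
    and increment: "eventually (\<lambda>n. real (Suc n) * h (Suc n) - real n * h n \<le> C * h (Suc n)) sequentially"
    and T_pos: "eventually (\<lambda>n. 0 < T n) sequentially"
    and g_pos: "eventually (\<lambda>n. 0 < real n * h n) sequentially"
  shows "T \<in> \<Omega>(\<lambda>n. real n * h n)"
proof -
  define g where "g n = real n * h n" for n
  define D where "D = max C 1"
  obtain k where k: "k > 0" "eventually (\<lambda>n. norm (t n) \<ge> k * norm (h n)) sequentially"
    using landau_omega.bigE[OF t_bigomega] by blast
  have t_Suc: "eventually (\<lambda>n. k * h (Suc n) \<le> t (Suc n)) sequentially"
    and h_Suc: "eventually (\<lambda>n. 0 \<le> h (Suc n)) sequentially"
  proof -
    have "eventually (\<lambda>n. k * h n \<le> t n) sequentially"
      using k(2) t_nonneg h_nonneg by eventually_elim auto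
    then show "eventually (\<lambda>n. k * h (Suc n) \<le> t (Suc n)) sequentially"
      using eventually_sequentially_Suc[of "\<lambda>n. k * h n \<le> t n"] by simp
    show "eventually (\<lambda>n. 0 \<le> h (Suc n)) sequentially"
      using h_nonneg eventually_sequentially_Suc[of "\<lambda>n. 0 \<le> h n"] by simp
  qed
  have "eventually (\<lambda>n. T (Suc n) = t (Suc n) + T n \<and> k * h (Suc n) \<le> t (Suc n)
           \<and> 0 \<le> h (Suc n) \<and> g (Suc n) \<le> g n + D * h (Suc n) \<and> 0 < T n \<and> 0 < g n) sequentially"
    using rec t_Suc h_Suc increment T_pos g_pos unfolding g_def
  proof eventually_elim
    case (elim n)
    have "C * h (Suc n) \<le> D * h (Suc n)" using elim(3) by (intro mult_right_mono) (auto simp: D_def)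
    with elim show ?case by auto
  qed
  then obtain N where N: "\<And>n. n \<ge> N \<Longrightarrow> T (Suc n) = t (Suc n) + T n \<and> k * h (Suc n) \<le> t (Suc n)
           \<and> 0 \<le> h (Suc n) \<and> g (Suc n) \<le> g n + D * h (Suc n) \<and> 0 < T n \<and> 0 < g n"
    unfolding eventually_sequentially by blast
  define \<delta> where "\<delta> = min (T N / g N) (k / D)"
  have D: "D > 0" by (simp add: D_def)
  have \<delta>: "\<delta> > 0" "\<delta> * g N \<le> T N" "\<delta> * D \<le> k"
    using N[of N] k(1) D by (auto simp: \<delta>_def min_def field_simps)
  have T_ge: "\<delta> * g n \<le> T n" if "N \<le> n" for n
    using that
  proof (induction n rule: dec_induct)
    case base
    then show ?case using \<delta>(2) .
  next
    case (step n)
    have "\<delta> * g (Suc n) \<le> \<delta> * (g n + D * h (Suc n))"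
      using N[OF step(1)] \<delta>(1) by (intro mult_left_mono) auto
    also have "\<dots> = \<delta> * g n + (\<delta> * D) * h (Suc n)" by (simp add: algebra_simps)
    also have "\<dots> \<le> T n + k * h (Suc n)"
      using step(3) \<delta>(3) N[OF step(1)] by (intro add_mono mult_right_mono) auto
    also have "\<dots> \<le> T (Suc n)" using N[OF step(1)] by simp
    finally show ?case .
  qed
  show ?thesis
  proof (rule landau_omega.bigI)
    show "\<delta> > 0" by (rule \<delta>(1))
    show "eventually (\<lambda>n. norm (T n) \<ge> \<delta> * norm (real n * h n)) sequentially"
      unfolding eventually_sequentially
    proof (intro exI[of _ N] allI impI)
      fix n assume "N \<le> n"
      then show "norm (T n) \<ge> \<delta> * norm (real n * h n)"
        using T_ge[of n] N[of n] by (simp add: g_def)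
    qed
  qed
qed

lemma smallo_halving_recursion:
  fixes U s g :: "nat \<Rightarrow> real"
  assumes rec: "eventually (\<lambda>n. U n = s n + U (n div 2)) sequentially"
    and s_smallo: "s \<in> o(g)"
    and U_nonneg: "eventually (\<lambda>n. 0 \<le> U n) sequentially"
    and g_nonneg: "\<And>n. 0 \<le> g n"
    and halving: "eventually (\<lambda>n. g (n div 2) \<le> g n / 2) sequentially"
    and g_lim: "filterlim g at_top sequentially"
  shows "U \<in> o(g)"
proof (rule landau_o.smallI)
  fix r :: real assume r: "r > 0"
  define \<epsilon> where "\<epsilon> = r / 3"
  have \<epsilon>: "\<epsilon> > 0" using r by (simp add: \<epsilon>_def)
  have "eventually (\<lambda>n. U n = s n + U (n div 2) \<and> s n \<le> \<epsilon> * g n \<and> g (n div 2) \<le> g n / 2) sequentially"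
    using rec landau_o.smallD[OF s_smallo \<epsilon>] halving
    by eventually_elim (use g_nonneg in auto)
  then obtain M where M: "\<And>n. n \<ge> M \<Longrightarrow> U n = s n + U (n div 2) \<and> s n \<le> \<epsilon> * g n \<and> g (n div 2) \<le> g n / 2"
    unfolding eventually_sequentially by blast
  define C where "C = Max (U ` {..M})"
  have U_le: "U n \<le> C + 2 * \<epsilon> * g n" for n
  proof (induction n rule: less_induct)
    case (less n)
    show ?case
    proof (cases "n \<le> M")
      case True
      then have "U n \<le> C" unfolding C_def by (intro Max_ge) auto
      moreover have "0 \<le> 2 * \<epsilon> * g n" using \<epsilon> g_nonneg[of n] by simp
      ultimately show ?thesis by linarith
    next
      case False
      then have "n div 2 < n" by simp
      have "U n = s n + U (n div 2)" using M False by simp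
      also have "\<dots> \<le> \<epsilon> * g n + (C + 2 * \<epsilon> * g (n div 2))"
        using M[of n] False less.IH[OF \<open>n div 2 < n\<close>] by simp
      also have "2 * \<epsilon> * g (n div 2) \<le> \<epsilon> * g n"
        using M[of n] False \<epsilon> by (simp add: field_simps)
      finally show ?thesis by simp
    qed
  qed
  have "eventually (\<lambda>n. \<bar>C\<bar> / \<epsilon> \<le> g n) sequentially"
    using g_lim by (simp add: filterlim_at_top)
  then show "eventually (\<lambda>n. norm (U n) \<le> r * norm (g n)) sequentially"
    using U_nonneg
  proof eventually_elim
    case (elim n)
    then have "\<bar>C\<bar> \<le> \<epsilon> * g n" using \<epsilon> by (simp add: field_simps)
    then have "U n \<le> 3 * \<epsilon> * g n" using U_le[of n] by linarith
    then show ?case using elim(2) g_nonneg[of n] by (simp add: \<epsilon>_def)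
  qed
qed

lemma smallo_halving_recursion_iff:
  fixes U s g :: "nat \<Rightarrow> real"
  assumes rec: "eventually (\<lambda>n. U n = s n + U (n div 2)) sequentially"
    and U_nonneg: "eventually (\<lambda>n. 0 \<le> U n) sequentially"
    and s_nonneg: "eventually (\<lambda>n. 0 \<le> s n) sequentially"
    and g_nonneg: "\<And>n. 0 \<le> g n"
    and halving: "eventually (\<lambda>n. g (n div 2) \<le> g n / 2) sequentially"
    and g_lim: "filterlim g at_top sequentially"
  shows "U \<in> o(g) \<longleftrightarrow> s \<in> o(g)"
proof
  assume "U \<in> o(g)"
  moreover have "s \<in> O(U)"
  proof (rule landau_o.bigI[of 1])
    obtain N where N: "\<And>n. n \<ge> N \<Longrightarrow> 0 \<le> U n"
      using U_nonneg unfolding eventually_sequentially by blast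
    have "eventually (\<lambda>n. 0 \<le> U (n div 2)) sequentially"
      unfolding eventually_sequentially by (intro exI[of _ "2 * N"] allI impI N) simp
    then show "eventually (\<lambda>n. norm (s n) \<le> 1 * norm (U n)) sequentially"
      using rec s_nonneg by eventually_elim simp
  qed simp
  ultimately show "s \<in> o(g)" by (rule landau_o.big_small_trans[rotated])
qed (rule smallo_halving_recursion[OF rec _ U_nonneg g_nonneg halving g_lim])

lemma bigtheta_linear_recursion_polylog:
  fixes T t :: "nat \<Rightarrow> real"
  assumes rec: "eventually (\<lambda>n. T (Suc n) = t (Suc n) + T n) sequentially"
    and t_bigtheta: "t \<in> \<Theta>(polylog a b)"
    and t_pos: "eventually (\<lambda>n. 0 < t n) sequentially"
    and T_pos: "eventually (\<lambda>n. 0 < T n) sequentially"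
  shows "T \<in> \<Theta>(\<lambda>n. real n * polylog a b n)"
proof
  have ev_ge: "eventually (\<lambda>n. k \<le> n) sequentially" for k by (rule eventually_ge_at_top)
  have polylog_Suc: "eventually (\<lambda>n. polylog a b n \<le> polylog a b (Suc n)) sequentially"
    using ev_ge[of 1] by eventually_elim (simp add: polylog_mono)
  have increment: "eventually (\<lambda>n. real (Suc n) * polylog a b (Suc n) - real n * polylog a b n
      \<le> real (a + 1 + b) * polylog a b (Suc n)) sequentially"
    using ev_ge[of 2] by eventually_elim (rule polylog_increment_le)
  have g_pos: "eventually (\<lambda>n. 0 < real n * polylog a b n) sequentially"
    using ev_ge[of 3] by eventually_elim (simp add: polylog_ge_one order_less_le_trans[OF zero_less_one])
  show "T \<in> O(\<lambda>n. real n * polylog a b n)"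
    using T_pos filterlim_real_times_polylog
    by (intro bigo_linear_recursion[OF rec bigthetaD1[OF t_bigtheta] _ polylog_Suc])
       (auto simp: polylog_nonneg elim!: eventually_mono)
  show "T \<in> \<Omega>(\<lambda>n. real n * polylog a b n)"
    using t_pos T_pos g_pos
    by (intro bigomega_linear_recursion[OF rec bigthetaD2[OF t_bigtheta] _ _ increment])
       (auto simp: polylog_nonneg elim!: eventually_mono)
qed

lemma smallo_real_times_polylog_halving_recursion_iff:
  fixes U s :: "nat \<Rightarrow> real"
  assumes rec: "eventually (\<lambda>n. U n = s n + U (n div 2)) sequentially"
    and U_nonneg: "eventually (\<lambda>n. 0 \<le> U n) sequentially"
    and s_nonneg: "eventually (\<lambda>n. 0 \<le> s n) sequentially"
  shows "U \<in> o(\<lambda>n. real n * polylog a b n) \<longleftrightarrow> s \<in> o(\<lambda>n. real n * polylog a b n)"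
proof (rule smallo_halving_recursion_iff[OF rec U_nonneg s_nonneg])
  show "eventually (\<lambda>n. real (n div 2) * polylog a b (n div 2) \<le> real n * polylog a b n / 2) sequentially"
    using eventually_ge_at_top[of 2] by eventually_elim (rule polylog_halving)
qed (simp_all add: polylog_nonneg filterlim_real_times_polylog)

lemma tendsto_divide_zero_iff_smallo:
  fixes f g :: "'a \<Rightarrow> 'b::real_normed_field"
  assumes "eventually (\<lambda>x. g x \<noteq> 0) F"
  shows "((\<lambda>x. f x / g x) \<longlongrightarrow> 0) F \<longleftrightarrow> f \<in> o[F](g)"
  using smalloI_tendsto[OF _ assms] smalloD_tendsto by blast

theorem mainTheorem10:
  fixes Tb Tr S Tu :: "nat \<Rightarrow> real"
    and a b c d :: nat
  assumes pos_b: "\<And>n. n \<ge> 1 \<Longrightarrow> Tb n > 0"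
    and pos_r: "\<And>n. n \<ge> 1 \<Longrightarrow> Tr n > 0"
    and pos_S: "\<And>n. n \<ge> 1 \<Longrightarrow> S n > 0"
    and pos_u: "\<And>n. n \<ge> 1 \<Longrightarrow> Tu n > 0"
    and rec_r: "\<And>n. n \<ge> 2 \<Longrightarrow> Tr n = Tb n + Tr (n - 1)"
    and rec_u: "\<And>n. n \<ge> 2 \<Longrightarrow> Tu n = S n + Tu (n div 2)"
    and Tb_Theta: "Tb \<in> \<Theta>(\<lambda>n. real n ^ a * ln (real n) ^ b)"
    and S_Theta: "S \<in> \<Theta>(\<lambda>n. real n ^ c * ln (real n) ^ d)"
  shows "((\<lambda>n. Tu n / Tr n) \<longlonglongrightarrow> 0) \<longleftrightarrow>
         ((\<lambda>n. S n / (real n * Tb n)) \<longlonglongrightarrow> 0)"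
proof -
  define g where "g = (\<lambda>n. real n * polylog a b n)"
  have pos_ev: "eventually (\<lambda>n. 0 < f n) sequentially"
    if "\<And>n. n \<ge> 1 \<Longrightarrow> f n > 0" for f :: "nat \<Rightarrow> real"
    using eventually_ge_at_top[of 1] by eventually_elim (rule that)
  note Tb_pos = pos_ev[of Tb, OF pos_b] and Tr_pos = pos_ev[of Tr, OF pos_r]
    and S_pos = pos_ev[of S, OF pos_S] and Tu_pos = pos_ev[of Tu, OF pos_u]
  have Tb_polylog: "Tb \<in> \<Theta>(polylog a b)"
    using Tb_Theta by (simp add: polylog_def[abs_def])
  have "eventually (\<lambda>n. Tr (Suc n) = Tb (Suc n) + Tr n) sequentially"
    using eventually_ge_at_top[of 1] by eventually_elim (simp add: rec_r)
  then have Tr_g: "Tr \<in> \<Theta>(g)"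
    unfolding g_def using Tb_polylog Tb_pos Tr_pos by (rule bigtheta_linear_recursion_polylog)
  have nTb_g: "(\<lambda>n. real n * Tb n) \<in> \<Theta>(g)"
    unfolding g_def using Tb_polylog by (intro landau_theta.mult) simp_all
  have "((\<lambda>n. Tu n / Tr n) \<longlonglongrightarrow> 0) \<longleftrightarrow> Tu \<in> o(Tr)"
    using Tr_pos by (intro tendsto_divide_zero_iff_smallo) (auto elim: eventually_mono)
  also have "\<dots> \<longleftrightarrow> Tu \<in> o(g)"
    by (simp add: landau_o.small.cong_bigtheta[OF Tr_g])
  also have "\<dots> \<longleftrightarrow> S \<in> o(g)"
  proof -
    have "eventually (\<lambda>n. Tu n = S n + Tu (n div 2)) sequentially"
      using eventually_ge_at_top[of 2] by eventually_elim (simp add: rec_u)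
    then show ?thesis
      unfolding g_def using Tu_pos S_pos
      by (intro smallo_real_times_polylog_halving_recursion_iff) (auto elim: eventually_mono)
  qed
  also have "\<dots> \<longleftrightarrow> S \<in> o(\<lambda>n. real n * Tb n)"
    by (simp add: landau_o.small.cong_bigtheta[OF nTb_g])
  also have "\<dots> \<longleftrightarrow> ((\<lambda>n. S n / (real n * Tb n)) \<longlonglongrightarrow> 0)"
  proof -
    have "eventually (\<lambda>n. real n * Tb n \<noteq> 0) sequentially"
      using eventually_ge_at_top[of 1] by eventually_elim (use pos_b in fastforce)
    then show ?thesis by (rule tendsto_divide_zero_iff_smallo[symmetric])
  qed
  finally show ?thesis .
qed

end
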